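(* Let $\iota:\langle X_0,d_0\rangle\to\langle X_1,d_1\rangle$ be a dense isometry between metric spaces and let $f:\langle X_1,d_1\rangle\to\langle X_2,d_2\rangle$ be a function between metric spaces. Then $f$ is Cauchy-continuous if and only if $f$ is continuous and $f\circ\iota$ is Cauchy-continuous.
   Context: A dense isometry is a distance-preserving map (not necessarily onto) whose image is dense. A function between metric spaces is Cauchy-continuous if it maps Cauchy sequences to Cauchy sequences. *)

theory Defs
  imports "HOL-Analysis.Analysis"
begin

end

theory Submission
  imports Defs
begin

text \<open>An isometry is Cauchy-continuous, so one direction is composition plus the fact that
  Cauchy-continuous maps are continuous. Conversely, a Cauchy sequence in the image of an isometry
  lifts to a Cauchy sequence of preimages, so Cauchy-continuity of \<open>f \<circ> \<iota>\<close> makes \<open>f\<close>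
  Cauchy-continuous on the dense image; a continuous map that is Cauchy-continuous on a dense
  subset is Cauchy-continuous on the whole space.\<close>

lemma isometry_imp_Cauchy_continuous_map:
  assumes into: "\<And>x. x \<in> mspace m0 \<Longrightarrow> \<iota> x \<in> mspace m1"
    and isometry: "\<And>x y. x \<in> mspace m0 \<Longrightarrow> y \<in> mspace m0 \<Longrightarrow>
                     mdist m1 (\<iota> x) (\<iota> y) = mdist m0 x y"
  shows "Cauchy_continuous_map m0 m1 \<iota>"
  unfolding Cauchy_continuous_map_def
    Metric_space.MCauchy_def [OF Metric_space_mspace_mdist]
  using into isometry by (auto simp: image_subset_iff)

lemma isometry_MCauchy_lift:
  assumes isometry: "\<And>x y. x \<in> mspace m0 \<Longrightarrow> y \<in> mspace m0 \<Longrightarrow>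
                       mdist m1 (\<iota> x) (\<iota> y) = mdist m0 x y"
    and \<sigma>: "Metric_space.MCauchy (mspace m1) (mdist m1) \<sigma>"
    and range_\<sigma>: "range \<sigma> \<subseteq> \<iota> ` mspace m0"
  obtains \<tau> where "Metric_space.MCauchy (mspace m0) (mdist m0) \<tau>" "\<sigma> = \<iota> \<circ> \<tau>"
proof -
  have "\<forall>n. \<exists>t. t \<in> mspace m0 \<and> \<sigma> n = \<iota> t"
    using range_\<sigma> by blast
  then obtain \<tau> where \<tau>: "\<And>n. \<tau> n \<in> mspace m0" and \<sigma>_eq: "\<And>n. \<sigma> n = \<iota> (\<tau> n)"
    by metis
  have dist_eq: "mdist m0 (\<tau> n) (\<tau> n') = mdist m1 (\<sigma> n) (\<sigma> n')" for n n'
    by (simp add: \<sigma>_eq isometry \<tau>)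
  have "Metric_space.MCauchy (mspace m0) (mdist m0) \<tau>"
    using \<sigma> \<tau> unfolding Metric_space.MCauchy_def [OF Metric_space_mspace_mdist] dist_eq
    by blast
  moreover have "\<sigma> = \<iota> \<circ> \<tau>"
    using \<sigma>_eq by (simp add: fun_eq_iff)
  ultimately show thesis
    using that by blast
qed

lemma MCauchy_submetric_iff:
  "Metric_space.MCauchy (mspace (submetric m S)) (mdist (submetric m S)) \<sigma> \<longleftrightarrow>
     range \<sigma> \<subseteq> S \<and> Metric_space.MCauchy (mspace m) (mdist m) \<sigma>"
  unfolding Metric_space.MCauchy_def [OF Metric_space_mspace_mdist] by auto

lemma Cauchy_continuous_map_on_isometry_image:
  assumes isometry: "\<And>x y. x \<in> mspace m0 \<Longrightarrow> y \<in> mspace m0 \<Longrightarrow>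
                       mdist m1 (\<iota> x) (\<iota> y) = mdist m0 x y"
    and f\<iota>: "Cauchy_continuous_map m0 m2 (f \<circ> \<iota>)"
  shows "Cauchy_continuous_map (submetric m1 (\<iota> ` mspace m0)) m2 f"
  unfolding Cauchy_continuous_map_def
proof (intro allI impI)
  fix \<sigma>
  assume "Metric_space.MCauchy (mspace (submetric m1 (\<iota> ` mspace m0)))
            (mdist (submetric m1 (\<iota> ` mspace m0))) \<sigma>"
  then obtain \<tau> where \<tau>: "Metric_space.MCauchy (mspace m0) (mdist m0) \<tau>" and "\<sigma> = \<iota> \<circ> \<tau>"
    using isometry_MCauchy_lift [OF isometry] MCauchy_submetric_iff by metis
  then have "f \<circ> \<sigma> = (f \<circ> \<iota>) \<circ> \<tau>"
    by (simp only: o_assoc)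
  then show "Metric_space.MCauchy (mspace m2) (mdist m2) (f \<circ> \<sigma>)"
    using f\<iota> [unfolded Cauchy_continuous_map_def, rule_format, OF \<tau>] by (simp only:)
qed

theorem lemma4p1:
  fixes m0 :: "'a metric" and m1 :: "'b metric" and m2 :: "'c metric"
    and \<iota> :: "'a \<Rightarrow> 'b" and f :: "'b \<Rightarrow> 'c"
  assumes iota_into: "\<And>x. x \<in> mspace m0 \<Longrightarrow> \<iota> x \<in> mspace m1"
    and iota_isometry: "\<And>x y. x \<in> mspace m0 \<Longrightarrow> y \<in> mspace m0 \<Longrightarrow>
                          mdist m1 (\<iota> x) (\<iota> y) = mdist m0 x y"
    and iota_dense: "mtopology_of m1 closure_of (\<iota> ` mspace m0) = mspace m1"
    and f_into: "\<And>x. x \<in> mspace m1 \<Longrightarrow> f x \<in> mspace m2"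
  shows "Cauchy_continuous_map m1 m2 f \<longleftrightarrow>
           continuous_map (mtopology_of m1) (mtopology_of m2) f
           \<and> Cauchy_continuous_map m0 m2 (f \<circ> \<iota>)"
proof
  assume "Cauchy_continuous_map m1 m2 f"
  then show "continuous_map (mtopology_of m1) (mtopology_of m2) f
               \<and> Cauchy_continuous_map m0 m2 (f \<circ> \<iota>)"
    using Cauchy_continuous_imp_continuous_map Cauchy_continuous_map_compose
      isometry_imp_Cauchy_continuous_map [OF iota_into iota_isometry] by blast
next
  assume cont: "continuous_map (mtopology_of m1) (mtopology_of m2) f
                  \<and> Cauchy_continuous_map m0 m2 (f \<circ> \<iota>)"
  have "Cauchy_continuous_map (submetric m1 (mspace m1)) m2 f"
  proof (rule Cauchy_continuous_map_on_intermediate_closure)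
    show "Cauchy_continuous_map (submetric m1 (\<iota> ` mspace m0)) m2 f"
      using Cauchy_continuous_map_on_isometry_image iota_isometry cont by blast
    show "\<iota> ` mspace m0 \<subseteq> mspace m1"
      using iota_into by blast
    show "mspace m1 \<subseteq> mtopology_of m1 closure_of (\<iota> ` mspace m0)"
      by (simp add: iota_dense)
    show "continuous_map (subtopology (mtopology_of m1) (mspace m1)) (mtopology_of m2) f"
      using cont continuous_map_from_subtopology by blast
  qed
  then show "Cauchy_continuous_map m1 m2 f"
    by simp
qed

end
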